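(* Let $G$ be a cop-win graph and let $v$ be a vertex of corner rank $k>1$. Then for every vertex $w$ that strictly corners $v$ in $G^{(k)}$, $v$ has a neighbor of corner rank $k-1$ that is not adjacent to $w$.
   Context: All graphs are finite, nonempty, and reflexive (every vertex has a loop). $N[v]$ is the closed neighborhood of $v$ (including $v$). For distinct $v,w$, $w$ strictly corners $v$ in a graph $H$ if $N_H[v]\subsetneq N_H[w]$; $v$ is then a strict corner of $H$. Corner ranking: set $G^{(1)}=G$, $k=1$. If $G^{(k)}$ is a clique, give all its vertices rank $k$ and stop. Else if $G^{(k)}$ has no strict corners, give all its vertices rank $\infty$ and stop. Else give every strict corner of $G^{(k)}$ rank $k$, delete them to get $G^{(k+1)}$ (induced subgraph), increase $k$ and repeat. A graph is cop-win iff its corner rank (largest rank of a vertex) is finite. Standing assumption: $G$ has finite corner rank at least 2. *)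

theory Defs
  imports Main
begin

definition reflexive_graph :: "'a set \<Rightarrow> ('a \<Rightarrow> 'a \<Rightarrow> bool) \<Rightarrow> bool" where
  "reflexive_graph V E \<longleftrightarrow> finite V \<and> V \<noteq> {} \<and>
     (\<forall>u\<in>V. E u u) \<and> (\<forall>u\<in>V. \<forall>v\<in>V. E u v \<longrightarrow> E v u)"

definition nbhd :: "('a \<Rightarrow> 'a \<Rightarrow> bool) \<Rightarrow> 'a set \<Rightarrow> 'a \<Rightarrow> 'a set" where
  "nbhd E S v = {u\<in>S. E v u}"

definition strictly_corners :: "('a \<Rightarrow> 'a \<Rightarrow> bool) \<Rightarrow> 'a set \<Rightarrow> 'a \<Rightarrow> 'a \<Rightarrow> bool" where
  "strictly_corners E S w v \<longleftrightarrow> v \<in> S \<and> w \<in> S \<and> w \<noteq> v \<and> nbhd E S v \<subset> nbhd E S w"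

definition strict_corners :: "('a \<Rightarrow> 'a \<Rightarrow> bool) \<Rightarrow> 'a set \<Rightarrow> 'a set" where
  "strict_corners E S = {v\<in>S. \<exists>w. strictly_corners E S w v}"

definition is_clique :: "('a \<Rightarrow> 'a \<Rightarrow> bool) \<Rightarrow> 'a set \<Rightarrow> bool" where
  "is_clique E S \<longleftrightarrow> (\<forall>u\<in>S. \<forall>v\<in>S. E u v)"

text \<open>The vertex set of G^(k) (1-indexed; index 0 is a dummy equal to V):
  G^(1) = G, G^(k+1) = G^(k) minus its strict corners.\<close>
fun stage :: "'a set \<Rightarrow> ('a \<Rightarrow> 'a \<Rightarrow> bool) \<Rightarrow> nat \<Rightarrow> 'a set" where
  "stage V E 0 = V"
| "stage V E (Suc 0) = V"
| "stage V E (Suc (Suc k)) = stage V E (Suc k) - strict_corners E (stage V E (Suc k))"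

text \<open>v receives (finite) corner rank k: the procedure has not stopped before step k,
  v is still present in G^(k), and either G^(k) is a clique or v is a strict corner of G^(k).\<close>
definition has_corner_rank :: "'a set \<Rightarrow> ('a \<Rightarrow> 'a \<Rightarrow> bool) \<Rightarrow> 'a \<Rightarrow> nat \<Rightarrow> bool" where
  "has_corner_rank V E v k \<longleftrightarrow> 1 \<le> k \<and> v \<in> stage V E k \<and>
     (\<forall>j. 1 \<le> j \<and> j < k \<longrightarrow> \<not> is_clique E (stage V E j) \<and> strict_corners E (stage V E j) \<noteq> {}) \<and>
     (is_clique E (stage V E k) \<or> v \<in> strict_corners E (stage V E k))"

text \<open>Cop-win = finite corner rank: every vertex receives a finite rank.\<close>
definition cop_win :: "'a set \<Rightarrow> ('a \<Rightarrow> 'a \<Rightarrow> bool) \<Rightarrow> bool" where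
  "cop_win V E \<longleftrightarrow> (\<forall>v\<in>V. \<exists>k. has_corner_rank V E v k)"

end

theory Submission
  imports Defs
begin

text \<open>Let S be the vertex set of G^(k-1). Since v survives into G^(k), it is not a strict
  corner of S, so N_S[v] \<subseteq> N_S[w] fails: equality would persist in G^(k), and strict
  inclusion would make v a strict corner of S. A witness u \<in> N_S[v] - N_S[w] cannot survive
  into G^(k), where N[v] \<subset> N[w]; hence u is a strict corner of S, i.e. has rank k - 1.\<close>

lemma stage_subset: "stage V E n \<subseteq> V"
  by (induction V E n rule: stage.induct) auto

lemma stage_Suc:
  assumes "1 \<le> k"
  shows "stage V E (Suc k) = stage V E k - strict_corners E (stage V E k)"
  using assms by (cases k) auto

lemma nbhd_Diff: "nbhd E (S - T) v = nbhd E S v - T"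
  unfolding nbhd_def by blast

lemma strict_corner_witness:
  assumes v_not_corner: "v \<in> S" "v \<notin> strict_corners E S"
    and corners: "strictly_corners E (S - strict_corners E S) w v"
  shows "\<exists>u\<in>strict_corners E S. E v u \<and> \<not> E w u"
proof -
  let ?C = "strict_corners E S"
  have w: "w \<in> S" "w \<noteq> v" and strict: "nbhd E S v - ?C \<subset> nbhd E S w - ?C"
    using corners by (auto simp: strictly_corners_def nbhd_Diff)
  have "\<not> nbhd E S v \<subseteq> nbhd E S w"
  proof
    assume sub: "nbhd E S v \<subseteq> nbhd E S w"
    show False
    proof (cases "nbhd E S v = nbhd E S w")
      case True
      with strict show False by simp
    next
      case False
      with sub w v_not_corner show False
        by (auto simp: strict_corners_def strictly_corners_def)
    qed
  qed
  then obtain u where u: "u \<in> nbhd E S v" "u \<notin> nbhd E S w"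
    by blast
  with strict have "u \<in> ?C"
    by blast
  with u show ?thesis
    using w(1) by (auto simp: nbhd_def)
qed

lemma has_corner_rank_prev:
  assumes "has_corner_rank V E v (Suc j)" "1 \<le> j" "u \<in> strict_corners E (stage V E j)"
  shows "has_corner_rank V E u j"
  using assms unfolding has_corner_rank_def strict_corners_def by auto

theorem lemma3p16:
  fixes V :: "'a set" and E :: "'a \<Rightarrow> 'a \<Rightarrow> bool" and v w :: 'a and k :: nat
  assumes "reflexive_graph V E"
    and "cop_win V E"
    and "v \<in> V"
    and "has_corner_rank V E v k"
    and "k > 1"
    and "strictly_corners E (stage V E k) w v"
  shows "\<exists>u\<in>V. E v u \<and> has_corner_rank V E u (k - 1) \<and> \<not> E w u"
proof -
  define j where "j = k - 1"
  have k: "k = Suc j" "1 \<le> j"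
    using assms(5) by (auto simp: j_def)
  let ?S = "stage V E j"
  have stage_k: "stage V E k = ?S - strict_corners E ?S"
    using k by (simp add: stage_Suc)
  with assms(6) have "v \<in> ?S" "v \<notin> strict_corners E ?S"
    by (auto simp: strictly_corners_def)
  with assms(6) stage_k obtain u where u: "u \<in> strict_corners E ?S" "E v u" "\<not> E w u"
    using strict_corner_witness by metis
  have "has_corner_rank V E u j"
    using has_corner_rank_prev assms(4) k u(1) by metis
  moreover have "u \<in> V"
    using u(1) stage_subset[of V E j] by (auto simp: strict_corners_def)
  ultimately show ?thesis
    using u j_def by blast
qed

end
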